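(* Let $\pi:(X,T)\to(Z,R)$ be a factor map between dynamical systems. (1) If $\pi$ is almost one-to-one and $(Z,R)$ is transitively sensitive (with some sensitive constant $\delta>0$), then $(X,T)$ is transitively sensitive. (2) If there exists $z\in Z$ with $\pi^{-1}(z)$ a singleton and $(X,T)$ is transitively sensitive, then $(Z,R)$ is sensitive; in particular $\mathrm{Eq}(Z,R)=\varnothing$.
   Context: A dynamical system $(X,T)$: $X$ is a compact metric space (metric $d$) with more than one point and without isolated points, $T:X\to X$ a continuous surjection. A factor map $\pi:(X,T)\to(Z,R)$ is a continuous surjection $\pi:X\to Z$ with $\pi\circ T=R\circ\pi$. $\pi$ is almost one-to-one if the set of $x\in X$ with $\pi^{-1}(\pi(x))=\{x\}$ is dense in $X$. "Opene" means open and nonempty. $S_T(U,\delta)=\{n\in\mathbb{Z}_+:\exists x_1,x_2\in U,\ d(T^nx_1,T^nx_2)>\delta\}$, $N_T(U,V)=\{n\in\mathbb{Z}_+:U\cap T^{-n}V\neq\varnothing\}$. $(X,T)$ is transitively sensitive (with sensitive constant $\delta$) if $S_T(W,\delta)\cap N_T(U,V)\neq\varnothing$ for all opene $U,V,W$. $(Z,R)$ is sensitive if there is $\delta>0$ such that for every $z\in Z$ and neighbourhood $U$ of $z$ there exist $y\in U$, $n\in\mathbb{N}$ with $\rho(R^nz,R^ny)>\delta$ ($\rho$ the metric of $Z$). $\mathrm{Eq}(Z,R)$ is the set of equicontinuity points: $z$ such that for every $\varepsilon>0$ there is $\eta>0$ with $\rho(z,z')<\eta\Rightarrow\rho(R^nz,R^nz')<\varepsilon$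 for all $n\in\mathbb{Z}_+$. *)

theory Defs
  imports "HOL-Analysis.Analysis"
begin

definition dynsys :: "'a::metric_space set \<Rightarrow> ('a \<Rightarrow> 'a) \<Rightarrow> bool" where
  "dynsys X T \<longleftrightarrow> compact X \<and> (\<exists>x\<in>X. \<exists>y\<in>X. x \<noteq> y) \<and>
     (\<forall>x\<in>X. x islimpt X) \<and> continuous_on X T \<and> T ` X = X"

definition factor_map ::
  "('a::metric_space \<Rightarrow> 'b::metric_space) \<Rightarrow> 'a set \<Rightarrow> ('a \<Rightarrow> 'a) \<Rightarrow> 'b set \<Rightarrow> ('b \<Rightarrow> 'b) \<Rightarrow> bool" where
  "factor_map \<pi> X T Z R \<longleftrightarrow> continuous_on X \<pi> \<and> \<pi> ` X = Z \<and> (\<forall>x\<in>X. \<pi> (T x) = R (\<pi> x))"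

definition almost_one_to_one :: "('a::metric_space \<Rightarrow> 'b) \<Rightarrow> 'a set \<Rightarrow> bool" where
  "almost_one_to_one \<pi> X \<longleftrightarrow> X \<subseteq> closure {x \<in> X. \<pi> -` {\<pi> x} \<inter> X = {x}}"

definition opene :: "'a::topological_space set \<Rightarrow> 'a set \<Rightarrow> bool" where
  "opene X U \<longleftrightarrow> openin (top_of_set X) U \<and> U \<noteq> {}"

definition S_T :: "('a::metric_space \<Rightarrow> 'a) \<Rightarrow> 'a set \<Rightarrow> real \<Rightarrow> nat set" where
  "S_T T U \<delta> = {n. \<exists>x1\<in>U. \<exists>x2\<in>U. dist ((T^^n) x1) ((T^^n) x2) > \<delta>}"

definition N_T :: "('a \<Rightarrow> 'a) \<Rightarrow> 'a set \<Rightarrow> 'a set \<Rightarrow> nat set" where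
  "N_T T U V = {n. U \<inter> (T^^n) -` V \<noteq> {}}"

definition trans_sensitive_const :: "'a::metric_space set \<Rightarrow> ('a \<Rightarrow> 'a) \<Rightarrow> real \<Rightarrow> bool" where
  "trans_sensitive_const X T \<delta> \<longleftrightarrow>
     (\<forall>U V W. opene X U \<longrightarrow> opene X V \<longrightarrow> opene X W \<longrightarrow> S_T T W \<delta> \<inter> N_T T U V \<noteq> {})"

definition trans_sensitive :: "'a::metric_space set \<Rightarrow> ('a \<Rightarrow> 'a) \<Rightarrow> bool" where
  "trans_sensitive X T \<longleftrightarrow> (\<exists>\<delta>>0. trans_sensitive_const X T \<delta>)"

definition sensitive :: "'b::metric_space set \<Rightarrow> ('b \<Rightarrow> 'b) \<Rightarrow> bool" where
  "sensitive Z R \<longleftrightarrow> (\<exists>\<delta>>0. \<forall>z\<in>Z. \<forall>U. (\<exists>V. openin (top_of_set Z) V \<and> z \<in> V \<and> V \<subseteq> U) \<and> U \<subseteq> Z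
      \<longrightarrow> (\<exists>y\<in>U. \<exists>n::nat. n \<ge> 1 \<and> dist ((R^^n) z) ((R^^n) y) > \<delta>))"

definition Eq_points :: "'b::metric_space set \<Rightarrow> ('b \<Rightarrow> 'b) \<Rightarrow> 'b set" where
  "Eq_points Z R = {z \<in> Z. \<forall>\<epsilon>>0. \<exists>\<eta>>0. \<forall>z'\<in>Z. dist z z' < \<eta> \<longrightarrow>
      (\<forall>n::nat. dist ((R^^n) z) ((R^^n) z') < \<epsilon>)}"

end

theory Submission
  imports Defs
begin

text \<open>
  (1) Since \<pi> is almost one-to-one, every opene set of X contains the full \<pi>-preimage of
  an opene set of Z (a small neighbourhood of the image of a point with singleton fibre,
  by compactness). Transitive sensitivity of Z for these three sets lifts to X, the
  separation constant being obtained from the uniform continuity of \<pi>.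

  (2) If the fibre of \<pi> over z0 is {x0}, points mapped close to z0 lie close to x0.
  Given a neighbourhood of z, apply transitive sensitivity of X to a small open set W over
  it and to the preimage of a small ball around z0: at the common time n one orbit of W is
  mapped close to z0, while one of two \<delta>-separated orbits must be mapped far from z0, so
  one of them separates from the orbit of z.
\<close>

lemma funpow_in_invariant: "T ` X \<subseteq> X \<Longrightarrow> x \<in> X \<Longrightarrow> (T^^n) x \<in> X"
  by (induction n) auto

lemma factor_map_funpow:
  assumes "factor_map \<pi> X T Z R" "T ` X \<subseteq> X" "x \<in> X"
  shows "\<pi> ((T^^n) x) = (R^^n) (\<pi> x)"
  using assms by (induction n) (auto simp: factor_map_def funpow_in_invariant)

lemma dist_gt_half_dist:
  fixes a b p :: "'a::metric_space"
  assumes "dist a b > 2 * \<epsilon>"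
  shows "dist p a > \<epsilon> \<or> dist p b > \<epsilon>"
  using assms dist_triangle3[of a b p] by linarith

lemma compact_fibre_neighbourhood:
  fixes \<pi> :: "'a::metric_space \<Rightarrow> 'b::metric_space"
  assumes "compact X" "continuous_on X \<pi>" "open G" "\<pi> -` {z} \<inter> X \<subseteq> G"
  obtains r where "r > 0" "\<And>x. x \<in> X \<Longrightarrow> dist (\<pi> x) z < r \<Longrightarrow> x \<in> G"
proof -
  have "compact (X - G)"
    using assms(1,3) by (simp add: Diff_eq compact_Int_closed closed_Compl)
  then have "closed (\<pi> ` (X - G))"
    using assms(2) by (meson Diff_subset compact_continuous_image continuous_on_subset compact_imp_closed)
  moreover have "z \<notin> \<pi> ` (X - G)" using assms(4) by auto
  ultimately obtain r where "r > 0" "ball z r \<subseteq> - \<pi> ` (X - G)"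
    by (metis ComplI open_Compl open_contains_ball)
  then show thesis by (intro that[of r]) (auto simp: dist_commute)
qed

lemma almost_one_to_one_opene_contains_preimage:
  fixes \<pi> :: "'a::metric_space \<Rightarrow> 'b::metric_space"
  assumes "compact X" "continuous_on X \<pi>" "\<pi> ` X = Z" "almost_one_to_one \<pi> X" "opene X W"
  obtains W' where "opene Z W'" "\<And>x. x \<in> X \<Longrightarrow> \<pi> x \<in> W' \<Longrightarrow> x \<in> W"
proof -
  obtain G where G: "open G" "W = X \<inter> G" using assms(5) by (auto simp: opene_def openin_open)
  obtain x where "x \<in> X" "x \<in> G" using assms(5) G by (auto simp: opene_def)
  then have "x \<in> closure {x \<in> X. \<pi> -` {\<pi> x} \<inter> X = {x}}"
    using assms(4) by (auto simp: almost_one_to_one_def)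
  then obtain w where w: "w \<in> X" "w \<in> G" "\<pi> -` {\<pi> w} \<inter> X = {w}"
    using open_Int_closure_eq_empty[OF G(1)] \<open>x \<in> G\<close> by blast
  then obtain r where "r > 0" "\<And>x. x \<in> X \<Longrightarrow> dist (\<pi> x) (\<pi> w) < r \<Longrightarrow> x \<in> G"
    using compact_fibre_neighbourhood[OF assms(1,2) G(1), of "\<pi> w"] by auto
  moreover have "opene Z (Z \<inter> ball (\<pi> w) r)"
    using assms(3) w \<open>r > 0\<close> by (auto simp: opene_def intro!: openin_open_Int)
  ultimately show thesis
    using G(2) by (intro that[of "Z \<inter> ball (\<pi> w) r"]) (auto simp: dist_commute)
qed

lemma N_T_factor_map_preimage:
  assumes "factor_map \<pi> X T Z R" "T ` X \<subseteq> X" "n \<in> N_T R U' V'"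
    "U' \<subseteq> Z" "\<And>x. x \<in> X \<Longrightarrow> \<pi> x \<in> U' \<Longrightarrow> x \<in> U"
    "\<And>x. x \<in> X \<Longrightarrow> \<pi> x \<in> V' \<Longrightarrow> x \<in> V"
  shows "n \<in> N_T T U V"
proof -
  obtain z where "z \<in> U'" "(R^^n) z \<in> V'" using assms(3) by (auto simp: N_T_def)
  moreover obtain x where "x \<in> X" "\<pi> x = z"
    using assms(1,4) \<open>z \<in> U'\<close> by (auto simp: factor_map_def)
  moreover have "\<pi> ((T^^n) x) = (R^^n) z"
    using factor_map_funpow[OF assms(1,2) \<open>x \<in> X\<close>] \<open>\<pi> x = z\<close> by simp
  ultimately have "x \<in> U" "(T^^n) x \<in> V"
    using assms(5,6) funpow_in_invariant[OF assms(2)] by auto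
  then show ?thesis by (auto simp: N_T_def)
qed

lemma S_T_factor_map_preimage:
  assumes "factor_map \<pi> X T Z R" "T ` X \<subseteq> X" "n \<in> S_T R W' \<delta>" "W' \<subseteq> Z"
    "\<And>x. x \<in> X \<Longrightarrow> \<pi> x \<in> W' \<Longrightarrow> x \<in> W"
    and unif: "\<And>x x'. x \<in> X \<Longrightarrow> x' \<in> X \<Longrightarrow> dist x x' < e \<Longrightarrow> dist (\<pi> x) (\<pi> x') < \<delta>"
    and "0 < e"
  shows "n \<in> S_T T W (e/2)"
proof -
  obtain z1 z2 where z: "z1 \<in> W'" "z2 \<in> W'" "dist ((R^^n) z1) ((R^^n) z2) > \<delta>"
    using assms(3) by (auto simp: S_T_def)
  obtain x1 x2 where x: "x1 \<in> X" "x2 \<in> X" "\<pi> x1 = z1" "\<pi> x2 = z2"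
    using assms(1,4) z(1,2) by (auto simp: factor_map_def) (metis subsetD imageE)
  have "\<not> dist ((T^^n) x1) ((T^^n) x2) < e"
    using unif[OF funpow_in_invariant[OF assms(2) x(1)] funpow_in_invariant[OF assms(2) x(2)]]
      factor_map_funpow[OF assms(1,2)] x z(3) by fastforce
  then have "dist ((T^^n) x1) ((T^^n) x2) > e/2" using \<open>0 < e\<close> by linarith
  then show ?thesis
    using assms(5) x z by (auto simp: S_T_def)
qed

lemma trans_sensitive_almost_one_to_one_extension:
  fixes \<pi> :: "'a::metric_space \<Rightarrow> 'b::metric_space"
  assumes "dynsys X T" "factor_map \<pi> X T Z R" "almost_one_to_one \<pi> X" "trans_sensitive Z R"
  shows "trans_sensitive X T"
proof -
  have X: "compact X" "T ` X \<subseteq> X" using assms(1) by (auto simp: dynsys_def)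
  have \<pi>: "continuous_on X \<pi>" "\<pi> ` X = Z" using assms(2) by (auto simp: factor_map_def)
  obtain \<delta> where "\<delta> > 0" and \<delta>: "trans_sensitive_const Z R \<delta>"
    using assms(4) by (auto simp: trans_sensitive_def)
  obtain e where "e > 0" and
    e: "\<And>x x'. x \<in> X \<Longrightarrow> x' \<in> X \<Longrightarrow> dist x x' < e \<Longrightarrow> dist (\<pi> x) (\<pi> x') < \<delta>"
    using compact_uniformly_continuous[OF \<pi>(1) X(1)] \<open>\<delta> > 0\<close>
    unfolding uniformly_continuous_on_def by (metis dist_commute)
  have "trans_sensitive_const X T (e/2)"
    unfolding trans_sensitive_const_def
  proof (intro allI impI)
    fix U V W assume "opene X U" "opene X V" "opene X W"
    then obtain U' V' W' where "opene Z U'" "opene Z V'" "opene Z W'"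
      and "\<And>x. x \<in> X \<Longrightarrow> \<pi> x \<in> U' \<Longrightarrow> x \<in> U" "\<And>x. x \<in> X \<Longrightarrow> \<pi> x \<in> V' \<Longrightarrow> x \<in> V"
        "\<And>x. x \<in> X \<Longrightarrow> \<pi> x \<in> W' \<Longrightarrow> x \<in> W"
      using almost_one_to_one_opene_contains_preimage[OF X(1) \<pi> assms(3)] by metis
    moreover from this obtain n where "n \<in> S_T R W' \<delta>" "n \<in> N_T R U' V'"
      using \<delta> unfolding trans_sensitive_const_def by blast
    moreover have "U' \<subseteq> Z" "W' \<subseteq> Z"
      using \<open>opene Z U'\<close> \<open>opene Z W'\<close> by (auto simp: opene_def dest: openin_imp_subset)
    ultimately have "n \<in> S_T T W (e/2)" "n \<in> N_T T U V"
      using S_T_factor_map_preimage[OF assms(2) X(2)] N_T_factor_map_preimage[OF assms(2) X(2)]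
        e \<open>e > 0\<close> by blast+
    then show "S_T T W (e/2) \<inter> N_T T U V \<noteq> {}" by blast
  qed
  then show ?thesis using \<open>e > 0\<close> unfolding trans_sensitive_def by (intro exI[of _ "e/2"]) auto
qed

lemma S_T_zero_notin:
  assumes "W \<subseteq> ball x (\<delta>/2)"
  shows "0 \<notin> S_T T W \<delta>"
proof
  assume "0 \<in> S_T T W \<delta>"
  then obtain x1 x2 where "x1 \<in> W" "x2 \<in> W" "dist x1 x2 > \<delta>" by (auto simp: S_T_def)
  moreover have "dist x x1 < \<delta>/2" "dist x x2 < \<delta>/2" using assms \<open>x1 \<in> W\<close> \<open>x2 \<in> W\<close> by auto
  ultimately show False using dist_triangle3[of x1 x2 x] by linarith
qed

lemma S_T_escapes_fibre_neighbourhood: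
  assumes "factor_map \<pi> X T Z R" "T ` X \<subseteq> X" "W \<subseteq> X" "n \<in> S_T T W \<delta>"
    and near: "\<And>x. x \<in> X \<Longrightarrow> dist (\<pi> x) z0 < r \<Longrightarrow> dist x0 x < \<delta>/2"
  shows "\<exists>x\<in>W. dist ((R^^n) (\<pi> x)) z0 \<ge> r"
proof (rule ccontr)
  assume "\<not> ?thesis"
  moreover obtain x1 x2 where x: "x1 \<in> W" "x2 \<in> W" "dist ((T^^n) x1) ((T^^n) x2) > \<delta>"
    using assms(4) by (auto simp: S_T_def)
  ultimately have "dist x0 ((T^^n) x1) < \<delta>/2" "dist x0 ((T^^n) x2) < \<delta>/2"
    using near factor_map_funpow[OF assms(1,2)] funpow_in_invariant[OF assms(2)] assms(3)
    by (metis not_le subsetD)+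
  then show False using x(3) dist_triangle3[of "(T^^n) x1" "(T^^n) x2" x0] by linarith
qed

lemma sensitive_factor_of_trans_sensitive:
  fixes \<pi> :: "'a::metric_space \<Rightarrow> 'b::metric_space"
  assumes "dynsys X T" "factor_map \<pi> X T Z R" "\<pi> -` {z0} \<inter> X = {x0}" "trans_sensitive X T"
  shows "sensitive Z R"
proof -
  have X: "compact X" "T ` X \<subseteq> X" using assms(1) by (auto simp: dynsys_def)
  have \<pi>: "continuous_on X \<pi>" "\<pi> ` X = Z" using assms(2) by (auto simp: factor_map_def)
  have "x0 \<in> X" "\<pi> x0 = z0" using assms(3) by auto
  obtain \<delta> where "\<delta> > 0" and \<delta>: "trans_sensitive_const X T \<delta>"
    using assms(4) by (auto simp: trans_sensitive_def)
  obtain r where "r > 0" and near: "\<And>x. x \<in> X \<Longrightarrow> dist (\<pi> x) z0 < r \<Longrightarrow> dist x0 x < \<delta>/2"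
    using compact_fibre_neighbourhood[OF X(1) \<pi>(1), of "ball x0 (\<delta>/2)" z0] assms(3) \<open>\<delta> > 0\<close>
    by auto
  have "\<exists>y\<in>U. \<exists>n\<ge>1. dist ((R^^n) z) ((R^^n) y) > r/4"
    if "z \<in> Z" "openin (top_of_set Z) V" "z \<in> V" "V \<subseteq> U" for z U V
  proof -
    obtain x where "x \<in> X" "\<pi> x = z" using \<pi>(2) \<open>z \<in> Z\<close> by blast
    define W where "W = X \<inter> \<pi> -` V \<inter> ball x (\<delta>/2)"
    define B where "B = X \<inter> \<pi> -` ball z0 (r/4)"
    have "openin (top_of_set X) (X \<inter> \<pi> -` V)"
      using continuous_openin_preimage[OF \<pi>(1) _ that(2)] \<pi>(2) by auto
    then have "opene X W"
      using \<open>x \<in> X\<close> \<open>\<pi> x = z\<close> \<open>z \<in> V\<close> \<open>\<delta> > 0\<close> by (auto simp: opene_def W_def openin_Int_open)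
    moreover have "opene X B"
      using continuous_openin_preimage_gen[OF \<pi>(1), of "ball z0 (r/4)"] \<open>x0 \<in> X\<close> \<open>\<pi> x0 = z0\<close> \<open>r > 0\<close>
      by (auto simp: opene_def B_def)
    ultimately obtain n where n: "n \<in> S_T T W \<delta>" "n \<in> N_T T W B"
      using \<delta> unfolding trans_sensitive_const_def by blast
    have "W \<subseteq> ball x (\<delta>/2)" by (auto simp: W_def)
    then have "n \<noteq> 0" using n(1) S_T_zero_notin by metis
    then have "n \<ge> 1" by simp
    have "W \<subseteq> X" by (auto simp: W_def)
    then obtain y1 where y1: "y1 \<in> W" "dist ((R^^n) (\<pi> y1)) z0 \<ge> r"
      using S_T_escapes_fibre_neighbourhood[OF assms(2) X(2) _ n(1), of z0 r x0] near by blast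
    obtain y2 where y2: "y2 \<in> W" "(T^^n) y2 \<in> B" using n(2) by (auto simp: N_T_def)
    then have "dist ((R^^n) (\<pi> y2)) z0 < r/4"
      using factor_map_funpow[OF assms(2) X(2)] by (auto simp: B_def W_def dist_commute)
    then have "dist ((R^^n) (\<pi> y1)) ((R^^n) (\<pi> y2)) > 2 * (r/4)"
      using y1(2) \<open>r > 0\<close> dist_triangle[of "(R^^n) (\<pi> y1)" z0 "(R^^n) (\<pi> y2)"] by linarith
    then show ?thesis
      using dist_gt_half_dist \<open>n \<ge> 1\<close> y1(1) y2(1) \<open>V \<subseteq> U\<close> by (fastforce simp: W_def)
  qed
  then show ?thesis using \<open>r > 0\<close> unfolding sensitive_def
    by (intro exI[of _ "r/4"]) auto
qed

lemma sensitive_imp_Eq_points_empty: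
  assumes "sensitive Z R"
  shows "Eq_points Z R = {}"
proof (rule ccontr)
  assume "Eq_points Z R \<noteq> {}"
  then obtain z where "z \<in> Z" and eq: "\<forall>\<epsilon>>0. \<exists>\<eta>>0. \<forall>z'\<in>Z. dist z z' < \<eta> \<longrightarrow>
      (\<forall>n. dist ((R^^n) z) ((R^^n) z') < \<epsilon>)" by (auto simp: Eq_points_def)
  obtain \<delta> where "\<delta> > 0" and sens: "\<forall>z\<in>Z. \<forall>U. (\<exists>V. openin (top_of_set Z) V \<and> z \<in> V \<and> V \<subseteq> U) \<and> U \<subseteq> Z
      \<longrightarrow> (\<exists>y\<in>U. \<exists>n. n \<ge> 1 \<and> dist ((R^^n) z) ((R^^n) y) > \<delta>)"
    using assms by (auto simp: sensitive_def)
  obtain \<eta> where "\<eta> > 0" and \<eta>: "\<forall>z'\<in>Z. dist z z' < \<eta> \<longrightarrow> (\<forall>n. dist ((R^^n) z) ((R^^n) z') < \<delta>)"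
    using eq \<open>\<delta> > 0\<close> by blast
  have "openin (top_of_set Z) (Z \<inter> ball z \<eta>)" by (auto intro: openin_open_Int)
  then obtain y n where "y \<in> Z \<inter> ball z \<eta>" "dist ((R^^n) z) ((R^^n) y) > \<delta>"
    using sens \<open>z \<in> Z\<close> \<open>\<eta> > 0\<close> by (metis Int_iff centre_in_ball inf_le1 order_refl)
  then show False using \<eta> by (meson IntD1 IntD2 mem_ball not_less_iff_gr_or_eq)
qed

theorem lemma4p4:
  fixes X :: "'a::metric_space set" and T :: "'a \<Rightarrow> 'a"
    and Z :: "'b::metric_space set" and R :: "'b \<Rightarrow> 'b" and \<pi> :: "'a \<Rightarrow> 'b"
  assumes "dynsys X T" and "dynsys Z R" and "factor_map \<pi> X T Z R"
  shows "(almost_one_to_one \<pi> X \<and> trans_sensitive Z R \<longrightarrow> trans_sensitive X T)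
    \<and> ((\<exists>z\<in>Z. \<exists>x. \<pi> -` {z} \<inter> X = {x}) \<and> trans_sensitive X T
         \<longrightarrow> sensitive Z R \<and> Eq_points Z R = {})"
  using trans_sensitive_almost_one_to_one_extension[OF assms(1,3)]
    sensitive_factor_of_trans_sensitive[OF assms(1,3)] sensitive_imp_Eq_points_empty
  by blast

end
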